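(* Let $\lambda_1,\lambda_2\in\Delta$, $(s,p)=(\lambda_1+\lambda_2,\lambda_1\lambda_2)\in\Gamma$, and let $\beta\in\mathbb{C}$ with $|\beta|\le1$ be such that $s=\beta+\bar\beta p$, where, in the case $|p|=1$, $\beta=\tfrac12 s$. Let $a\in\mathbb{C}$. The following statements are equivalent: (1) $(a,s,p)\in\overline{\mathcal{P}}$; (2) $(a,s,p)\in\overline{\mathcal{P}_\mu}$; (3) $|a|\le\left|1-\dfrac{\tfrac12 s\bar\beta}{1+\sqrt{1-|\beta|^2}}\right|$; (4) $|a|\le\tfrac12|1-\bar\lambda_2\lambda_1|+\tfrac12(1-|\lambda_1|^2)^{1/2}(1-|\lambda_2|^2)^{1/2}$; (5) $|\Psi_z(a,s,p)|\le1$ for all $z\in\mathbb{D}$; (6) there exists $A\in\mathbb{C}^{2\times2}$ with $\|A\|\le1$ and $\pi(A)=(a,s,p)$; (7) there exists $A\in\mathbb{C}^{2\times2}$ with $\mu_E(A)\le1$ and $\pi(A)=(a,s,p)$.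
   Context: $\mathbb{D}$ is the open and $\Delta$ the closed unit disc; $\Gamma=\{(z+w,zw):|z|\le1,|w|\le1\}$ (closure of the symmetrised bidisc $\mathbb{G}$); for $(s,p)\in\Gamma$ and $z\in\mathbb{D}$ one has $1-sz+pz^2\neq0$. $\mathbb{B}$ is the open unit ball of $\mathbb{C}^{2\times2}$ (operator norm); $\pi(A)=(a_{21},\operatorname{tr}A,\det A)$; $\mathcal{P}=\pi(\mathbb{B})$ and $\overline{\mathcal{P}}$ is its closure in $\mathbb{C}^3$. $E=\{\begin{pmatrix}z&w\\0&z\end{pmatrix}:z,w\in\mathbb{C}\}$, $1/\mu_E(A)=\inf\{\|X\|:X\in E,\det(I-AX)=0\}$; $\mathcal{P}_\mu=\{\pi(A):\mu_E(A)<1\}$, with closure $\overline{\mathcal{P}_\mu}$. $\Psi_z(a,s,p)=a(1-|z|^2)/(1-sz+pz^2)$. *)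

theory Defs
  imports "HOL-Analysis.Analysis"
begin

type_synonym cmat2 = "complex^2^2"

definition opnorm :: "cmat2 \<Rightarrow> real" where
  "opnorm A = onorm (\<lambda>x. A *v x)"

text \<open>pi(A) = (a21, tr A, det A); index 1 is the first row/column, 2 the second.\<close>
definition piA :: "cmat2 \<Rightarrow> complex \<times> complex \<times> complex" where
  "piA A = (A $ 2 $ 1, trace A, det A)"

definition Espace :: "cmat2 set" where
  "Espace = {X. X $ 1 $ 1 = X $ 2 $ 2 \<and> X $ 2 $ 1 = 0}"

text \<open>mu_E(A): 1/mu_E(A) = inf {||X|| : X in E, det(I - AX) = 0}; inf of empty set = +oo, so mu_E = 0.\<close>
definition muE :: "cmat2 \<Rightarrow> real" where
  "muE A = (let S = {opnorm X | X. X \<in> Espace \<and> det (mat 1 - A ** X) = 0}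
            in if S = {} then 0 else inverse (Inf S))"

definition Pent :: "(complex \<times> complex \<times> complex) set" where
  "Pent = piA ` {A. opnorm A < 1}"

definition Pmu :: "(complex \<times> complex \<times> complex) set" where
  "Pmu = piA ` {A. muE A < 1}"

definition Psi :: "complex \<Rightarrow> complex \<Rightarrow> complex \<Rightarrow> complex \<Rightarrow> complex" where
  "Psi z a s p = a * (1 - (cmod z)^2) / (1 - s * z + p * z^2)"

end

theory Submission
  imports Defs
begin

text \<open>
  The implications \<open>(6) \<Rightarrow> (1) \<Rightarrow> (2) \<Rightarrow> (5) \<Rightarrow> (3) \<Leftrightarrow> (4) \<Rightarrow> (6) \<Rightarrow> (7) \<Rightarrow> (5)\<close> are proved.
  Shrinking a contraction \<open>A\<close> to \<open>t A\<close>, \<open>t \<rightarrow> 1\<^sup>-\<close>, puts \<open>\<pi>(A)\<close> into the closure of \<open>\<P>\<close>, and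
  \<open>\<mu>\<^sub>E \<le> \<parallel>\<cdot>\<parallel>\<close> gives \<open>\<P> \<subseteq> \<P>\<^sub>\<mu>\<close>. If \<open>|\<Psi>\<^sub>z(\<pi>(A))| > 1\<close> for some \<open>z \<in> \<bbbD>\<close>, then a matrix
  \<open>X = [[z, w], [0, z]] \<in> E\<close> with \<open>|w| < 1 - |z|\<^sup>2\<close>, hence \<open>\<parallel>X\<parallel> < 1\<close>, makes \<open>I - A X\<close> singular, so
  \<open>\<mu>\<^sub>E(A) > 1\<close>; as (5) is a closed condition it holds on the closure of \<open>\<P>\<^sub>\<mu>\<close>.
  Evaluating (5) at \<open>z = \<beta>\<^sup>* / (1 + \<surd>(1 - |\<beta>|\<^sup>2))\<close> (along a radius when \<open>|\<beta>| = 1\<close>) yields (3),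
  the bounds in (3) and (4) coincide by a direct computation, and below that bound an explicit
  contraction \<open>[[s/2 + h, b], [a, s/2 - h]]\<close> realises \<open>(a, s, p)\<close>. Contractivity of \<open>2 \<times> 2\<close> matrices
  is checked throughout by the criterion \<open>\<parallel>A\<parallel> \<le> 1 \<longleftrightarrow> |det A| \<le> 1 \<and> \<parallel>A\<parallel>\<^sub>F\<^sup>2 \<le> 1 + |det A|\<^sup>2\<close>.
\<close>

section \<open>Operator norm of \<open>2 \<times> 2\<close> matrices\<close>

lemma norm_vec2_power2: "(norm (v :: 'a::real_normed_vector^2))^2 = (norm (v$1))^2 + (norm (v$2))^2"
  unfolding norm_vec_def L2_set_def by (simp add: sum_2)

lemma matrix_vector_mult_2:
  fixes A :: "'a::semiring_1^2^2"
  shows "(A *v v)$1 = A$1$1 * v$1 + A$1$2 * v$2" and "(A *v v)$2 = A$2$1 * v$1 + A$2$2 * v$2"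
  by (simp_all add: matrix_vector_mult_def sum_2)

lemma trace_2: "trace (A :: 'a::semiring_1^2^2) = A$1$1 + A$2$2"
  by (simp add: trace_def sum_2)

lemma singular_matrix_kernel:
  fixes M :: "'a::field^'n^'n"
  assumes "det M = 0"
  obtains v where "v \<noteq> 0" and "M *v v = 0"
  using assms by (metis invertible_det_nz invertible_left_inverse matrix_left_invertible_ker)

lemma norm_matrix_vector_le_opnorm: "norm (A *v x) \<le> opnorm A * norm x"
  unfolding opnorm_def by (rule onorm[OF matrix_vector_mul_bounded_linear])

lemma opnorm_nonneg: "0 \<le> opnorm A"
  unfolding opnorm_def by (rule onorm_pos_le[OF matrix_vector_mul_bounded_linear])

lemma opnorm_scaleR: "opnorm (t *\<^sub>R A) = \<bar>t\<bar> * opnorm A"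
proof -
  have "(\<lambda>x. (t *\<^sub>R A) *v x) = (\<lambda>x. t *\<^sub>R (A *v x))"
    unfolding matrix_vector_mult_def by (simp add: fun_eq_iff vec_eq_iff scaleR_sum_right)
  then show ?thesis
    unfolding opnorm_def by (simp add: onorm_scaleR matrix_vector_mul_bounded_linear)
qed

lemma opnorm_le_if_coordinate_bound:
  fixes A :: cmat2
  assumes "0 \<le> c"
    and "\<And>x1 x2. cmod (A$1$1 * x1 + A$1$2 * x2)^2 + cmod (A$2$1 * x1 + A$2$2 * x2)^2
               \<le> c^2 * (cmod x1^2 + cmod x2^2)"
  shows "opnorm A \<le> c"
  unfolding opnorm_def
proof (rule onorm_le)
  fix x :: "complex^2"
  have "norm (A *v x)^2 = cmod (A$1$1 * x$1 + A$1$2 * x$2)^2 + cmod (A$2$1 * x$1 + A$2$2 * x$2)^2"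
    by (simp only: norm_vec2_power2 matrix_vector_mult_2)
  also have "\<dots> \<le> (c * norm x)^2"
    using assms(2) by (simp only: norm_vec2_power2 power_mult_distrib)
  finally show "norm (A *v x) \<le> c * norm x"
    by (rule power2_le_imp_le) (simp add: assms(1))
qed

lemma two_mult_le_quadratic_form:
  fixes h1 h2 g x y :: real
  assumes "0 \<le> h1" "0 \<le> h2" "g^2 \<le> h1 * h2" "0 \<le> x" "0 \<le> y"
  shows "2 * g * x * y \<le> h1 * x^2 + h2 * y^2"
proof -
  have "\<bar>g\<bar> \<le> sqrt h1 * sqrt h2"
    using assms(3) by (simp add: real_le_rsqrt real_sqrt_mult[symmetric])
  then have "g * (x * y) \<le> (sqrt h1 * sqrt h2) * (x * y)"
    using assms(4,5) by (meson abs_ge_self order_trans mult_right_mono mult_nonneg_nonneg)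
  then have "2 * g * x * y \<le> 2 * (sqrt h1 * x) * (sqrt h2 * y)"
    by (simp add: algebra_simps)
  also have "\<dots> \<le> (sqrt h1 * x)^2 + (sqrt h2 * y)^2"
    using sum_squares_bound[of "sqrt h1 * x" "sqrt h2 * y"] by simp
  also have "\<dots> = h1 * x^2 + h2 * y^2"
    using assms(1,2) by (simp add: power_mult_distrib)
  finally show ?thesis .
qed

lemma Frobenius_criterion_entries:
  fixes a b c d x y :: complex and k :: real
  assumes k: "0 < k" and det: "cmod (a * d - b * c) \<le> k^2"
    and F: "k^2 * (cmod a^2 + cmod b^2 + cmod c^2 + cmod d^2) \<le> k^4 + cmod (a * d - b * c)^2"
  shows "cmod (a * x + b * y)^2 + cmod (c * x + d * y)^2 \<le> k^2 * (cmod x^2 + cmod y^2)"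
proof -
  \<comment> \<open>\<open>h1, h2, g\<close> are the entries of \<open>k\<^sup>2 I - A\<^sup>* A\<close>; its trace and determinant are nonnegative\<close>
  define h1 where "h1 = k^2 - cmod a^2 - cmod c^2"
  define h2 where "h2 = k^2 - cmod b^2 - cmod d^2"
  define g where "g = a * cnj b + c * cnj d"
  have expand: "k^2 * (cmod x^2 + cmod y^2) - (cmod (a * x + b * y)^2 + cmod (c * x + d * y)^2)
      = h1 * cmod x^2 + h2 * cmod y^2 - 2 * Re (g * x * cnj y)"
    unfolding h1_def h2_def g_def cmod_power2 by (simp add: algebra_simps power2_eq_square)
  have "h1 * h2 - cmod g^2 = k^4 - k^2 * (cmod a^2 + cmod b^2 + cmod c^2 + cmod d^2) + cmod (a * d - b * c)^2"
    unfolding h1_def h2_def g_def cmod_power2 by (simp add: algebra_simps power2_eq_square power4_eq_xxxx)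
  then have prod: "cmod g^2 \<le> h1 * h2"
    using F by linarith
  have "k^2 * (cmod a^2 + cmod b^2 + cmod c^2 + cmod d^2) \<le> k^2 * (2 * k^2)"
    using F power_mono[OF det norm_ge_zero, of 2] by (simp add: power2_eq_square power4_eq_xxxx)
  then have "h1 + h2 \<ge> 0"
    using k unfolding h1_def h2_def by simp
  moreover have "h1 * h2 \<ge> 0"
    using prod zero_le_power2[of "cmod g"] by linarith
  ultimately have "h1 \<ge> 0" "h2 \<ge> 0"
    by (auto simp: zero_le_mult_iff)
  then have "2 * cmod g * cmod x * cmod y \<le> h1 * cmod x^2 + h2 * cmod y^2"
    using prod by (intro two_mult_le_quadratic_form) auto
  moreover have "Re (g * x * cnj y) \<le> cmod g * cmod x * cmod y"
    by (metis complex_Re_le_cmod complex_mod_cnj norm_mult)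
  ultimately have "0 \<le> k^2 * (cmod x^2 + cmod y^2) - (cmod (a * x + b * y)^2 + cmod (c * x + d * y)^2)"
    unfolding expand by linarith
  then show ?thesis
    by simp
qed

lemma opnorm_le_Frobenius:
  fixes A :: cmat2
  assumes "0 < c" and "cmod (det A) \<le> c^2"
    and "c^2 * (cmod (A$1$1)^2 + cmod (A$1$2)^2 + cmod (A$2$1)^2 + cmod (A$2$2)^2) \<le> c^4 + cmod (det A)^2"
  shows "opnorm A \<le> c"
proof (rule opnorm_le_if_coordinate_bound)
  show "0 \<le> c"
    using assms(1) by simp
  fix x1 x2
  show "cmod (A$1$1 * x1 + A$1$2 * x2)^2 + cmod (A$2$1 * x1 + A$2$2 * x2)^2 \<le> c^2 * (cmod x1^2 + cmod x2^2)"
    using assms unfolding det_2 by (rule Frobenius_criterion_entries)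
qed

lemma opnorm_upper_triangular_Toeplitz_lt_1:
  fixes X :: cmat2
  assumes X: "X$1$1 = z" "X$1$2 = w" "X$2$1 = 0" "X$2$2 = z"
    and w: "cmod w < 1 - cmod z^2"
  shows "opnorm X < 1"
proof -
  define \<zeta> where "\<zeta> = cmod z"
  define \<omega> where "\<omega> = cmod w"
  \<comment> \<open>the root of \<open>t\<^sup>2 = \<omega> t + \<zeta>\<^sup>2\<close>, for which \<open>X / t\<close> satisfies the Frobenius criterion with equality\<close>
  define t where "t = (\<omega> + sqrt (\<omega>^2 + 4 * \<zeta>^2)) / 2"
  have nonneg: "\<zeta> \<ge> 0" "\<omega> \<ge> 0"
    by (auto simp: \<zeta>_def \<omega>_def)
  have w': "\<omega> < 1 - \<zeta>^2"
    using w by (simp add: \<zeta>_def \<omega>_def)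
  have "0 \<le> 2 - \<omega>"
    using w' zero_le_power2[of \<zeta>] by linarith
  then have "sqrt (\<omega>^2 + 4 * \<zeta>^2) < 2 - \<omega>"
    using w' by (intro real_less_lsqrt) (auto simp: power2_diff algebra_simps)
  then have t_lt_1: "t < 1"
    by (simp add: t_def)
  have t_root: "t^2 = \<omega> * t + \<zeta>^2"
    using real_sqrt_pow2[of "\<omega>^2 + 4 * \<zeta>^2"]
    unfolding t_def by (simp add: power2_eq_square algebra_simps)
  show ?thesis
  proof (cases "t = 0")
    case True
    moreover have "0 \<le> sqrt (\<omega>^2 + 4 * \<zeta>^2)"
      by simp
    ultimately have "\<omega> = 0"
      using nonneg unfolding t_def by (simp add: add_nonneg_eq_0_iff)
    moreover have "\<zeta> = 0"
      using t_root True by simp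
    ultimately have "z = 0" "w = 0"
      by (simp_all add: \<zeta>_def \<omega>_def)
    then have "X = 0"
      using X by (simp add: vec_eq_iff forall_2)
    then show ?thesis
      by (simp add: opnorm_def onorm_zero)
  next
    case False
    moreover have "0 \<le> t"
      using nonneg by (simp add: t_def)
    ultimately have t_pos: "0 < t"
      by simp
    have "opnorm X \<le> t"
    proof (rule opnorm_le_Frobenius[OF t_pos])
      have det: "cmod (det X) = \<zeta>^2"
        using X by (simp add: det_2 \<zeta>_def norm_mult power2_eq_square)
      then show "cmod (det X) \<le> t^2"
        using t_root nonneg t_pos by simp
      have "t^2 * (2 * \<zeta>^2 + \<omega>^2) = t^4 + (\<zeta>^2)^2"
        using t_root by (simp add: power2_eq_square power4_eq_xxxx algebra_simps)
      then show "t^2 * (cmod (X$1$1)^2 + cmod (X$1$2)^2 + cmod (X$2$1)^2 + cmod (X$2$2)^2)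
          \<le> t^4 + cmod (det X)^2"
        using X det by (simp add: \<zeta>_def \<omega>_def)
    qed
    with t_lt_1 show ?thesis
      by simp
  qed
qed

section \<open>The structured singular value \<open>\<mu>\<^sub>E\<close>\<close>

lemma one_le_opnorm_mult_if_singular:
  fixes A X :: cmat2
  assumes "det (mat 1 - A ** X) = 0"
  shows "1 \<le> opnorm A * opnorm X"
proof -
  obtain v where v: "v \<noteq> 0" "(mat 1 - A ** X) *v v = 0"
    using singular_matrix_kernel[OF assms] .
  then have "v = A *v (X *v v)"
    by (simp add: matrix_vector_mult_diff_rdistrib matrix_vector_mul_assoc)
  then have "norm v \<le> opnorm A * norm (X *v v)"
    by (metis norm_matrix_vector_le_opnorm)
  also have "\<dots> \<le> opnorm A * (opnorm X * norm v)"
    by (rule mult_left_mono[OF norm_matrix_vector_le_opnorm opnorm_nonneg])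
  finally show ?thesis
    using v(1) by simp
qed

definition singular_E_norms :: "cmat2 \<Rightarrow> real set" where
  "singular_E_norms A = {opnorm X | X. X \<in> Espace \<and> det (mat 1 - A ** X) = 0}"

lemma muE_eq: "muE A = (if singular_E_norms A = {} then 0 else inverse (Inf (singular_E_norms A)))"
  unfolding muE_def singular_E_norms_def Let_def by simp

lemma inverse_opnorm_le_Inf_singular_E_norms:
  assumes "singular_E_norms A \<noteq> {}"
  shows "0 < opnorm A" and "inverse (opnorm A) \<le> Inf (singular_E_norms A)"
proof -
  have ge: "1 \<le> opnorm A * y" if "y \<in> singular_E_norms A" for y
    using that one_le_opnorm_mult_if_singular unfolding singular_E_norms_def by blast
  then show pos: "0 < opnorm A"
    using assms opnorm_nonneg[of A] by (metis ex_in_conv mult_zero_left not_one_le_zero order_le_less)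
  show "inverse (opnorm A) \<le> Inf (singular_E_norms A)"
    using assms ge pos by (intro cInf_greatest) (auto simp: field_simps)
qed

lemma muE_le_opnorm: "muE A \<le> opnorm A"
proof (cases "singular_E_norms A = {}")
  case True
  then show ?thesis
    by (simp add: muE_eq opnorm_nonneg)
next
  case False
  then have "inverse (Inf (singular_E_norms A)) \<le> inverse (inverse (opnorm A))"
    using inverse_opnorm_le_Inf_singular_E_norms by (intro le_imp_inverse_le) auto
  with False show ?thesis
    by (simp add: muE_eq)
qed

lemma one_le_muE_mult_opnorm:
  assumes "X \<in> Espace" and "det (mat 1 - A ** X) = 0"
  shows "1 \<le> muE A * opnorm X"
proof -
  have X: "opnorm X \<in> singular_E_norms A"
    using assms unfolding singular_E_norms_def by blast
  then have ne: "singular_E_norms A \<noteq> {}"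
    by blast
  have "0 < Inf (singular_E_norms A)"
    using inverse_opnorm_le_Inf_singular_E_norms[OF ne] by (meson inverse_positive_iff_positive less_le_trans)
  moreover have "Inf (singular_E_norms A) \<le> opnorm X"
    using X opnorm_nonneg by (intro cInf_lower) (auto simp: singular_E_norms_def bdd_below_def)
  ultimately show ?thesis
    using ne by (simp add: muE_eq field_simps)
qed

lemma det_I_minus_mult_Espace:
  fixes A X :: cmat2
  assumes "X$1$1 = z" "X$1$2 = w" "X$2$1 = 0" "X$2$2 = z"
  shows "det (mat 1 - A ** X) = 1 - trace A * z + det A * z^2 - A$2$1 * w"
proof -
  have entry: "(mat 1 - A ** X)$i$j = (if i = j then 1 else 0) - (A$i$1 * X$1$j + A$i$2 * X$2$j)" for i j
    by (simp add: matrix_matrix_mult_def mat_def sum_2)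
  have "(1::2) \<noteq> 2"
    by simp
  then show ?thesis
    unfolding det_2 entry trace_2 using assms by (simp add: algebra_simps power2_eq_square)
qed

lemma muE_le_1_imp_bound:
  fixes A :: cmat2
  assumes mu: "muE A \<le> 1" and z: "cmod z < 1"
  shows "cmod (A$2$1) * (1 - cmod z^2) \<le> cmod (1 - trace A * z + det A * z^2)"
proof (rule ccontr)
  define a where "a = A$2$1"
  define q where "q = 1 - trace A * z + det A * z^2"
  assume "\<not> ?thesis"
  then have lt: "cmod q < cmod a * (1 - cmod z^2)"
    unfolding a_def q_def by simp
  then have "a \<noteq> 0"
    by auto
  \<comment> \<open>a matrix \<open>X \<in> E\<close> with \<open>\<parallel>X\<parallel> < 1\<close> making \<open>I - A X\<close> singular contradicts \<open>\<mu>\<^sub>E(A) \<le> 1\<close>\<close>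
  define X :: cmat2 where "X = vector [vector [z, q / a], vector [0, z]]"
  have X: "X$1$1 = z" "X$1$2 = q / a" "X$2$1 = 0" "X$2$2 = z"
    unfolding X_def by simp_all
  have "cmod (q / a) < 1 - cmod z^2"
    using lt \<open>a \<noteq> 0\<close> by (simp add: norm_divide divide_less_eq mult.commute)
  then have "opnorm X < 1"
    by (rule opnorm_upper_triangular_Toeplitz_lt_1[OF X])
  moreover have "X \<in> Espace"
    unfolding Espace_def using X by simp
  moreover have "det (mat 1 - A ** X) = 0"
    unfolding det_I_minus_mult_Espace[OF X] using \<open>a \<noteq> 0\<close> by (simp add: a_def q_def)
  ultimately have "1 \<le> muE A * opnorm X" "opnorm X < 1"
    using one_le_muE_mult_opnorm by blast+
  moreover have "muE A * opnorm X \<le> opnorm X"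
    using mult_right_mono[OF mu opnorm_nonneg] by simp
  ultimately show False
    by linarith
qed

section \<open>The closures of \<open>\<P>\<close> and \<open>\<P>\<^sub>\<mu>\<close>\<close>

lemma piA_scaleR: "piA (t *\<^sub>R A) = (of_real t * A$2$1, of_real t * trace A, (of_real t)^2 * det A)"
  unfolding piA_def trace_2 det_2 vector_scaleR_component
  by (simp add: scaleR_conv_of_real algebra_simps power2_eq_square)

lemma piA_in_closure_Pent:
  assumes "opnorm A \<le> 1"
  shows "piA A \<in> closure Pent"
proof -
  define f where "f t = piA (t *\<^sub>R A)" for t :: real
  have "eventually (\<lambda>t. t \<in> {0<..<1::real}) (at_left 1)"
    by (rule eventually_at_left_real) simp
  then have "eventually (\<lambda>t. f t \<in> closure Pent) (at_left 1)"
  proof eventually_elim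
    case (elim t)
    then have "opnorm (t *\<^sub>R A) \<le> t"
      using assms by (simp add: opnorm_scaleR mult_left_le)
    with elim have "opnorm (t *\<^sub>R A) < 1"
      by simp
    then have "f t \<in> Pent"
      unfolding f_def Pent_def by (rule imageI[OF CollectI])
    then show ?case
      using closure_subset by blast
  qed
  moreover have "(f \<longlongrightarrow> f 1) (at_left 1)"
    unfolding f_def piA_scaleR by (intro tendsto_intros)
  ultimately have "f 1 \<in> closure Pent"
    by (intro Lim_in_closed_set[OF closed_closure]) simp_all
  then show ?thesis
    by (simp add: f_def)
qed

lemma Pent_subset_Pmu: "Pent \<subseteq> Pmu"
  unfolding Pent_def Pmu_def using muE_le_opnorm by (auto intro: le_less_trans)

text \<open>The condition \<open>|\<Psi>\<^sub>z(a, s, p)| \<le> 1\<close> for all \<open>z \<in> \<bbbD>\<close> with the denominator cleared, so that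
  it defines a closed set.\<close>
definition Psi_bounded_set :: "(complex \<times> complex \<times> complex) set" where
  "Psi_bounded_set =
    {(a, s, p). \<forall>z. cmod z < 1 \<longrightarrow> cmod a * (1 - cmod z^2) \<le> cmod (1 - s * z + p * z^2)}"

lemma closed_Psi_bounded_set: "closed Psi_bounded_set"
proof -
  have eq: "Psi_bounded_set =
      (\<Inter>z\<in>ball 0 1. {x. cmod (fst x) * (1 - cmod z^2) \<le> cmod (1 - fst (snd x) * z + snd (snd x) * z^2)})"
    unfolding Psi_bounded_set_def by (auto simp: mem_ball_0)
  show ?thesis
    unfolding eq by (intro closed_INT ballI closed_Collect_le continuous_intros)
qed

lemma denominator_Psi_nonzero:
  assumes "cmod l1 \<le> 1" and "cmod l2 \<le> 1" and "cmod z < 1"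
  shows "1 - (l1 + l2) * z + (l1 * l2) * z^2 \<noteq> 0"
proof -
  have "1 - l * z \<noteq> 0" if "cmod l \<le> 1" for l
  proof -
    have "cmod l * cmod z \<le> cmod z"
      using that by (simp add: mult_left_le_one_le)
    then have "cmod (l * z) < 1"
      using assms(3) by (simp add: norm_mult)
    then show ?thesis
      by auto
  qed
  moreover have "1 - (l1 + l2) * z + (l1 * l2) * z^2 = (1 - l1 * z) * (1 - l2 * z)"
    by (simp add: algebra_simps power2_eq_square)
  ultimately show ?thesis
    using assms(1,2) by simp
qed

lemma norm_Psi_le_1_iff:
  assumes "cmod z < 1" and "1 - s * z + p * z^2 \<noteq> 0"
  shows "cmod (Psi z a s p) \<le> 1 \<longleftrightarrow> cmod a * (1 - cmod z^2) \<le> cmod (1 - s * z + p * z^2)"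
proof -
  have "cmod z^2 \<le> 1"
    using assms(1) by (intro power_le_one) auto
  then have "cmod (complex_of_real (1 - cmod z^2)) = 1 - cmod z^2"
    unfolding norm_of_real by simp
  then have "cmod (Psi z a s p) = cmod a * (1 - cmod z^2) / cmod (1 - s * z + p * z^2)"
    unfolding Psi_def norm_divide norm_mult by simp
  then show ?thesis
    using assms(2) by (simp add: divide_le_eq)
qed

lemma Psi_le_1_iff_in_Psi_bounded_set:
  assumes "cmod l1 \<le> 1" and "cmod l2 \<le> 1" and "s = l1 + l2" and "p = l1 * l2"
  shows "(\<forall>z. cmod z < 1 \<longrightarrow> cmod (Psi z a s p) \<le> 1) \<longleftrightarrow> (a, s, p) \<in> Psi_bounded_set"
  using norm_Psi_le_1_iff denominator_Psi_nonzero[OF assms(1,2)] assms(3,4)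
  by (auto simp: Psi_bounded_set_def)

lemma piA_in_Psi_bounded_set:
  assumes "muE A \<le> 1"
  shows "piA A \<in> Psi_bounded_set"
  using muE_le_1_imp_bound[OF assms] by (simp add: piA_def Psi_bounded_set_def)

lemma closure_Pmu_subset_Psi_bounded_set: "closure Pmu \<subseteq> Psi_bounded_set"
proof (rule closure_minimal[OF _ closed_Psi_bounded_set])
  show "Pmu \<subseteq> Psi_bounded_set"
    unfolding Pmu_def using piA_in_Psi_bounded_set by auto
qed

section \<open>The bound in terms of \<open>\<beta>\<close>\<close>

definition beta_bound :: "complex \<Rightarrow> complex \<Rightarrow> real" where
  "beta_bound \<beta> s = cmod (1 - (s / 2 * cnj \<beta>) / (1 + sqrt (1 - (cmod \<beta>)^2)))"

lemma Psi_denominator_factorization: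
  fixes \<beta> c p e :: complex
  assumes \<beta>c: "\<beta> * c = 1 - (e - 1)^2" and e: "e \<noteq> 0"
  shows "1 - (\<beta> + c * p) * (c / e) + p * (c / e)^2 = (1 - ((\<beta> + c * p) / 2 * c) / e) * (2 * (e - 1) / e)"
proof -
  have "1 - (\<beta> + c * p) * (c / e) + p * (c / e)^2 = (e^2 - (\<beta> * c + c^2 * p) * e + p * c^2) / e^2"
    using e by (simp add: field_simps power2_eq_square)
  also have "e^2 - (\<beta> * c + c^2 * p) * e + p * c^2 = (2 * e - (\<beta> * c + c^2 * p)) * (e - 1)"
    unfolding \<beta>c by (simp add: algebra_simps power2_eq_square)
  also have "\<dots> / e^2 = (1 - ((\<beta> + c * p) / 2 * c) / e) * (2 * (e - 1) / e)"
    using e by (simp add: field_simps power2_eq_square)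
  finally show ?thesis .
qed

lemma le_beta_bound_interior:
  assumes \<beta>: "cmod \<beta> < 1" and s: "s = \<beta> + cnj \<beta> * p"
    and bound: "\<And>z. cmod z < 1 \<Longrightarrow> cmod a * (1 - cmod z^2) \<le> cmod (1 - s * z + p * z^2)"
  shows "cmod a \<le> beta_bound \<beta> s"
proof -
  define \<sigma> where "\<sigma> = sqrt (1 - cmod \<beta>^2)"
  define e where "e = 1 + complex_of_real \<sigma>"
  define c where "c = cnj \<beta>"
  \<comment> \<open>at this point of \<open>\<bbbD>\<close> the condition yields exactly the bound\<close>
  define z where "z = c / e"
  have "cmod \<beta>^2 < 1"
    using \<beta> by (simp add: abs_square_less_1)
  then have \<sigma>_pos: "0 < \<sigma>" and \<sigma>_sq: "\<sigma>^2 = 1 - cmod \<beta>^2"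
    by (simp_all add: \<sigma>_def)
  have e: "e = complex_of_real (1 + \<sigma>)"
    by (simp add: e_def)
  have e_nz: "e \<noteq> 0"
    unfolding e of_real_eq_0_iff using \<sigma>_pos by linarith
  have norm_e: "cmod e = 1 + \<sigma>"
    unfolding e norm_of_real using \<sigma>_pos by simp
  have "\<beta> * c = complex_of_real (1 - \<sigma>^2)"
    unfolding c_def complex_norm_square[symmetric] \<sigma>_sq by simp
  then have \<beta>c: "\<beta> * c = 1 - (e - 1)^2"
    by (simp add: e_def)
  have factor: "1 - s * z + p * z^2 = (1 - (s / 2 * c) / e) * (2 * (e - 1) / e)"
    unfolding s z_def c_def[symmetric] by (rule Psi_denominator_factorization[OF \<beta>c e_nz])
  have "cmod \<beta> < 1 + \<sigma>"
    using \<beta> \<sigma>_pos by simp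
  then have z: "cmod z < 1"
    using \<sigma>_pos by (simp add: z_def c_def norm_e norm_divide)
  have "1 - cmod z^2 = 1 - (1 - \<sigma>^2) / (1 + \<sigma>)^2"
    using \<sigma>_sq by (simp add: z_def c_def norm_e norm_divide power_divide)
  also have "\<dots> = 1 - (1 - \<sigma>) / (1 + \<sigma>)"
    using \<sigma>_pos by (simp add: power2_eq_square divide_simps) (simp add: algebra_simps)
  also have "\<dots> = 2 * \<sigma> / (1 + \<sigma>)"
    using \<sigma>_pos by (simp add: divide_simps)
  also have "\<dots> = cmod (2 * (e - 1) / e)"
    unfolding norm_divide norm_mult e_def add_diff_cancel_left' norm_e[unfolded e_def] norm_of_real
    using \<sigma>_pos by simp
  finally have weight: "1 - cmod z^2 = cmod (2 * (e - 1) / e)" .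
  have "cmod a * (1 - cmod z^2) \<le> cmod (1 - (s / 2 * c) / e) * (1 - cmod z^2)"
    using bound[OF z] unfolding factor norm_mult weight .
  moreover have "0 < 1 - cmod z^2"
    using z by (simp add: abs_square_less_1)
  ultimately show ?thesis
    by (simp add: beta_bound_def e_def \<sigma>_def c_def)
qed

lemma le_beta_bound_boundary:
  assumes \<beta>: "cmod \<beta> = 1" and s: "s = \<beta> + cnj \<beta> * p"
    and bound: "\<And>z. cmod z < 1 \<Longrightarrow> cmod a * (1 - cmod z^2) \<le> cmod (1 - s * z + p * z^2)"
  shows "cmod a \<le> beta_bound \<beta> s"
proof -
  define q where "q = cnj \<beta>^2 * p"
  have unit: "\<beta> * cnj \<beta> = 1"
    using \<beta> by (simp add: complex_norm_square[symmetric])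
  have "beta_bound \<beta> s = cmod (1 - s / 2 * cnj \<beta>)"
    using \<beta> by (simp add: beta_bound_def)
  also have "1 - s / 2 * cnj \<beta> = (1 - q) / 2"
    unfolding s q_def using unit by (simp add: field_simps power2_eq_square)
  finally have bound_eq: "beta_bound \<beta> s = cmod (1 - q) / 2"
    by (simp add: norm_divide)
  \<comment> \<open>along the radius towards \<open>cnj \<beta>\<close> the bound reads \<open>|a| (1 + t) \<le> |1 - t q|\<close>\<close>
  have radial: "cmod a * (1 + t) \<le> cmod (1 - of_real t * q)" if t: "0 < t" "t < 1" for t
  proof -
    define z where "z = complex_of_real t * cnj \<beta>"
    have z: "cmod z = t"
      using \<beta> t by (simp add: z_def norm_mult)
    have eq: "1 - s * z + p * z^2 = complex_of_real (1 - t) * (1 - of_real t * q)"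
      unfolding s z_def q_def using unit by (simp add: algebra_simps power2_eq_square)
    have "(cmod a * (1 + t)) * (1 - t) = cmod a * (1 - t^2)"
      by (simp add: power2_eq_square algebra_simps)
    also have "\<dots> \<le> cmod (1 - s * z + p * z^2)"
      using bound[of z] z t by simp
    also have "\<dots> = cmod (1 - of_real t * q) * (1 - t)"
      using t unfolding eq norm_mult norm_of_real by simp
    finally show ?thesis
      using t by (simp add: mult_le_cancel_right)
  qed
  have "((\<lambda>t. cmod (1 - of_real t * q)) \<longlongrightarrow> cmod (1 - of_real 1 * q)) (at_left (1::real))"
    by (intro tendsto_intros)
  moreover have "((\<lambda>t. cmod a * (1 + t)) \<longlongrightarrow> cmod a * (1 + 1)) (at_left (1::real))"
    by (intro tendsto_intros)
  moreover have "eventually (\<lambda>t. cmod a * (1 + t) \<le> cmod (1 - of_real t * q)) (at_left (1::real))"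
    using eventually_at_left_real[of 0 1] by (rule eventually_mono) (auto intro: radial)
  ultimately have "cmod a * (1 + 1) \<le> cmod (1 - of_real 1 * q)"
    by (rule tendsto_le[OF trivial_limit_at_left_real])
  then show ?thesis
    by (simp add: bound_eq)
qed

lemma Psi_bounded_imp_le_beta_bound:
  assumes "cmod \<beta> \<le> 1" and "s = \<beta> + cnj \<beta> * p" and "(a, s, p) \<in> Psi_bounded_set"
  shows "cmod a \<le> beta_bound \<beta> s"
proof -
  have "\<And>z. cmod z < 1 \<Longrightarrow> cmod a * (1 - cmod z^2) \<le> cmod (1 - s * z + p * z^2)"
    using assms(3) by (simp add: Psi_bounded_set_def)
  then show ?thesis
    using assms(1,2) le_beta_bound_interior le_beta_bound_boundary by (cases "cmod \<beta> = 1") auto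
qed

section \<open>Equality of the two bounds\<close>

definition lambda_bound :: "complex \<Rightarrow> complex \<Rightarrow> real" where
  "lambda_bound l1 l2 =
    cmod (1 - cnj l2 * l1) / 2 + sqrt (1 - (cmod l1)^2) * sqrt (1 - (cmod l2)^2) / 2"

lemma norm_weighted_conj_sum:
  fixes A B :: real and w :: complex
  defines "r \<equiv> sqrt A * sqrt B"
  assumes "0 \<le> A" "0 \<le> B"
  shows "cmod (A * w + B * cnj w + 2 * r * cmod w) = cmod w * (A + B) + 2 * r * Re w"
proof -
  define N where "N = A * w + B * cnj w + 2 * r * cmod w"
  have r: "0 \<le> r" "r^2 = A * B"
    using assms by (simp_all add: r_def power_mult_distrib)
  have "2 * r \<le> A + B"
    using assms sum_squares_bound[of "sqrt A" "sqrt B"] by (simp add: r_def)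
  then have "2 * r * \<bar>Re w\<bar> \<le> (A + B) * cmod w"
    using r(1) abs_Re_le_cmod[of w] by (intro mult_mono) auto
  moreover have "- (2 * r * Re w) \<le> 2 * r * \<bar>Re w\<bar>"
    using r(1) mult_left_mono[OF abs_ge_minus_self[of "Re w"], of "2 * r"] by simp
  ultimately have nonneg: "0 \<le> cmod w * (A + B) + 2 * r * Re w"
    by (simp add: algebra_simps)
  have "cmod N^2 = ((A + B) * Re w + 2 * r * cmod w)^2 + ((A - B) * Im w)^2"
    unfolding cmod_power2 N_def by (simp add: algebra_simps)
  also have "\<dots> = (cmod w * (A + B) + 2 * r * Re w)^2"
    using r(2) cmod_power2[of w] by algebra
  finally show ?thesis
    using nonneg by (simp add: N_def power2_eq_iff_nonneg)
qed

lemma beta_mult_one_minus_norm_square: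
  assumes "s = \<beta> + cnj \<beta> * p"
  shows "\<beta> * (1 - cmod p^2) = s - cnj s * p"
proof -
  have "(complex_of_real (cmod p))^2 = p * cnj p"
    by (metis complex_norm_square of_real_power)
  then show ?thesis
    unfolding assms by (simp add: algebra_simps)
qed

lemma norm_square_sum_minus_conj_sum_mult_prod:
  fixes l1 l2 :: complex
  shows "cmod (l1 + l2 - cnj (l1 + l2) * (l1 * l2))^2
    = (1 - cmod (l1 * l2)^2)^2 - (1 - cmod l1^2) * (1 - cmod l2^2) * cmod (1 - cnj l2 * l1)^2"
proof -
  have "complex_of_real (cmod (l1 + l2 - cnj (l1 + l2) * (l1 * l2))^2)
      = (l1 + l2 - (cnj l1 + cnj l2) * (l1 * l2)) * (cnj l1 + cnj l2 - (l1 + l2) * (cnj l1 * cnj l2))"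
    unfolding complex_norm_square by simp
  also have "\<dots> = (1 - (l1 * l2) * cnj (l1 * l2))^2
      - (1 - l1 * cnj l1) * (1 - l2 * cnj l2) * ((1 - cnj l2 * l1) * cnj (1 - cnj l2 * l1))"
    by (simp add: algebra_simps power2_eq_square)
  also have "\<dots> = complex_of_real
      ((1 - cmod (l1 * l2)^2)^2 - (1 - cmod l1^2) * (1 - cmod l2^2) * cmod (1 - cnj l2 * l1)^2)"
    unfolding complex_norm_square[symmetric] by simp
  finally show ?thesis
    by (simp only: of_real_eq_iff)
qed

lemma sqrt_one_minus_norm_square_beta:
  assumes l1: "cmod l1 \<le> 1" and l2: "cmod l2 \<le> 1" and s: "s = l1 + l2" and p: "p = l1 * l2"
    and sb: "s = \<beta> + cnj \<beta> * p" and p1: "cmod p < 1"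
  shows "sqrt (1 - cmod \<beta>^2)
    = sqrt (1 - cmod l1^2) * sqrt (1 - cmod l2^2) * cmod (1 - cnj l2 * l1) / (1 - cmod p^2)"
proof -
  define r where "r = sqrt (1 - cmod l1^2) * sqrt (1 - cmod l2^2)"
  define m where "m = cmod (1 - cnj l2 * l1)"
  define D where "D = 1 - cmod p^2"
  have r: "0 \<le> r" "r^2 = (1 - cmod l1^2) * (1 - cmod l2^2)"
    using l1 l2 by (simp_all add: r_def abs_square_le_1 power_mult_distrib)
  have D_pos: "0 < D"
    using p1 by (simp add: D_def abs_square_less_1)
  have "\<beta> * complex_of_real D = s - cnj s * p"
    unfolding D_def using beta_mult_one_minus_norm_square[OF sb] by simp
  then have "cmod \<beta> * D = cmod (s - cnj s * p)"
    using D_pos by (metis abs_of_pos norm_mult norm_of_real)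
  then have "(cmod \<beta> * D)^2 = D^2 - r^2 * m^2"
    using norm_square_sum_minus_conj_sum_mult_prod[of l1 l2] unfolding s p r(2) m_def D_def by simp
  then have "1 - cmod \<beta>^2 = (r * m / D)^2"
    using D_pos by (simp add: field_simps power_mult_distrib)
  then show ?thesis
    using r(1) D_pos by (simp add: r_def m_def D_def)
qed

lemma beta_bound_as_quotient:
  assumes \<beta>D: "\<beta> * complex_of_real D = s - cnj s * p" and D: "0 < D" and t: "0 \<le> t"
    and \<sigma>: "sqrt (1 - cmod \<beta>^2) = t / D"
  shows "beta_bound \<beta> s = cmod (2 * complex_of_real (D + t) - s * (cnj s - s * cnj p)) / (2 * (D + t))"
proof -
  define E where "E = complex_of_real (D + t)"
  have D_nz: "complex_of_real D \<noteq> 0" and E_nz: "E \<noteq> 0"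
    unfolding E_def of_real_eq_0_iff using D t by simp_all
  have "1 + complex_of_real (t / D) = E / complex_of_real D"
    unfolding E_def using D_nz by (simp add: field_simps)
  moreover have c\<beta>D: "cnj \<beta> * complex_of_real D = cnj s - s * cnj p"
    using arg_cong[OF \<beta>D, of cnj] by simp
  ultimately have "1 - (s / 2 * cnj \<beta>) / (1 + sqrt (1 - cmod \<beta>^2)) = (2 * E - s * (cnj s - s * cnj p)) / (2 * E)"
    unfolding \<sigma> c\<beta>D[symmetric] using D_nz E_nz by (simp add: field_simps)
  moreover have "cmod (2 * E) = 2 * (D + t)"
    unfolding E_def norm_mult norm_of_real using D t by simp
  ultimately show ?thesis
    by (simp add: beta_bound_def norm_divide E_def)
qed

lemma two_Re_one_minus_cnj_mult:
  fixes l1 l2 :: complex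
  shows "2 * Re (1 - cnj l2 * l1) = (1 - cmod l1^2) + (1 - cmod l2^2) - (1 - cmod l1^2) * (1 - cmod l2^2)
    + cmod (1 - cnj l2 * l1)^2"
  unfolding cmod_power2 by (simp add: power2_eq_square algebra_simps)

lemma beta_bound_eq_lambda_bound_interior:
  assumes l1: "cmod l1 \<le> 1" and l2: "cmod l2 \<le> 1" and s: "s = l1 + l2" and p: "p = l1 * l2"
    and sb: "s = \<beta> + cnj \<beta> * p" and p1: "cmod p < 1"
  shows "beta_bound \<beta> s = lambda_bound l1 l2"
proof -
  define A where "A = 1 - cmod l1^2"
  define B where "B = 1 - cmod l2^2"
  define r where "r = sqrt A * sqrt B"
  define w where "w = 1 - cnj l2 * l1"
  define m where "m = cmod w"
  define D where "D = 1 - cmod p^2"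
  have AB: "0 \<le> A" "0 \<le> B"
    using l1 l2 by (simp_all add: A_def B_def abs_square_le_1)
  then have r: "0 \<le> r" "r^2 = A * B"
    by (simp_all add: r_def power_mult_distrib)
  have DE_pos: "0 < D + r * m"
    using p1 r(1) by (simp add: D_def m_def abs_square_less_1 add_pos_nonneg)
  have "beta_bound \<beta> s = cmod (2 * complex_of_real (D + r * m) - s * (cnj s - s * cnj p)) / (2 * (D + r * m))"
    using beta_mult_one_minus_norm_square[OF sb] p1 r(1)
      sqrt_one_minus_norm_square_beta[OF assms, folded A_def B_def r_def w_def m_def D_def]
    by (intro beta_bound_as_quotient) (auto simp: D_def m_def abs_square_less_1)
  also have "2 * complex_of_real (D + r * m) - s * (cnj s - s * cnj p)
      = complex_of_real A * w + complex_of_real B * cnj w + complex_of_real (2 * r * m)"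
    unfolding A_def B_def D_def p s w_def of_real_add of_real_diff complex_norm_square
    by (simp add: algebra_simps)
  also have "cmod \<dots> = m * (A + B) + r * (2 * Re w)"
    using norm_weighted_conj_sum[OF AB, of w, folded r_def m_def] by simp
  also have "\<dots> = (r + m) * ((A + B - r^2) + r * m)"
  proof -
    have "2 * Re w = A + B - A * B + m^2"
      unfolding A_def B_def m_def w_def by (rule two_Re_one_minus_cnj_mult)
    then show ?thesis
      using r(2) by algebra
  qed
  also have "A + B - r^2 = D"
    unfolding r(2) A_def B_def D_def p by (simp add: norm_mult power_mult_distrib algebra_simps)
  finally have "beta_bound \<beta> s = (r + m) * (D + r * m) / (2 * (D + r * m))" .
  then have "beta_bound \<beta> s = (r + m) / 2"
    using DE_pos by (metis less_irrefl nonzero_mult_divide_mult_cancel_right)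
  then show ?thesis
    by (simp add: lambda_bound_def r_def m_def w_def A_def B_def add_divide_distrib)
qed

lemma parallelogram_law_complex:
  fixes u v :: complex
  shows "cmod (u + v)^2 + cmod (u - v)^2 = 2 * cmod u^2 + 2 * cmod v^2"
  unfolding cmod_power2 by (simp add: power2_eq_square algebra_simps)

lemma norm_one_minus_cnj_mult_square:
  fixes l1 l2 :: complex
  shows "cmod (1 - cnj l2 * l1)^2 = (1 - cmod l1^2) * (1 - cmod l2^2) + cmod (l1 - l2)^2"
  unfolding cmod_power2 by (simp add: power2_eq_square algebra_simps)

lemma beta_bound_eq_lambda_bound_boundary:
  assumes l1: "cmod l1 \<le> 1" and l2: "cmod l2 \<le> 1" and s: "s = l1 + l2" and p: "p = l1 * l2"
    and p1: "cmod p = 1" and \<beta>: "\<beta> = s / 2"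
  shows "beta_bound \<beta> s = lambda_bound l1 l2"
proof -
  define m where "m = cmod (1 - cnj l2 * l1)"
  have prod: "cmod l1 * cmod l2 = 1"
    using p1 by (simp add: p norm_mult)
  moreover have "cmod l1 * cmod l2 \<le> cmod l1" "cmod l1 * cmod l2 \<le> cmod l2"
    using l1 l2 by (simp_all add: mult_left_le mult_left_le_one_le)
  ultimately have unit: "cmod l1 = 1" "cmod l2 = 1"
    using l1 l2 by linarith+
  have m0: "0 \<le> m"
    by (simp add: m_def)
  have "m^2 = cmod (l1 - l2)^2"
    using norm_one_minus_cnj_mult_square[of l2 l1] unit by (simp add: m_def)
  then have "cmod s^2 = 4 - m^2"
    using parallelogram_law_complex[of l1 l2] unit by (simp add: s)
  then have \<beta>_sq: "cmod \<beta>^2 = 1 - (m / 2)^2"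
    by (simp add: \<beta> norm_divide power_divide)
  have sq: "sqrt (1 - cmod \<beta>^2) = m / 2"
    using \<beta>_sq m0 by simp
  have "s / 2 * cnj \<beta> = complex_of_real (cmod \<beta>^2)"
    unfolding \<beta> complex_norm_square ..
  then have "1 - (s / 2 * cnj \<beta>) / (1 + sqrt (1 - cmod \<beta>^2))
      = complex_of_real (1 - cmod \<beta>^2 / (1 + sqrt (1 - cmod \<beta>^2)))"
    by simp
  also have "1 - cmod \<beta>^2 / (1 + sqrt (1 - cmod \<beta>^2)) = m / 2"
    unfolding sq unfolding \<beta>_sq using m0 by (simp add: power2_eq_square field_simps)
  finally have "beta_bound \<beta> s = \<bar>m / 2\<bar>"
    unfolding beta_bound_def by (simp only: norm_of_real)
  then show ?thesis
    using unit m0 by (simp add: lambda_bound_def m_def)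
qed

lemma beta_bound_eq_lambda_bound:
  assumes "cmod l1 \<le> 1" and "cmod l2 \<le> 1" and "s = l1 + l2" and "p = l1 * l2"
    and "s = \<beta> + cnj \<beta> * p" and "cmod p = 1 \<Longrightarrow> \<beta> = s / 2"
  shows "beta_bound \<beta> s = lambda_bound l1 l2"
proof (cases "cmod p = 1")
  case True
  show ?thesis
    by (rule beta_bound_eq_lambda_bound_boundary[OF assms(1-4) True assms(6)[OF True]])
next
  case False
  moreover have "cmod p \<le> 1"
    using assms(1-4) by (simp add: norm_mult mult_le_one)
  ultimately have "cmod p < 1"
    by simp
  then show ?thesis
    by (rule beta_bound_eq_lambda_bound_interior[OF assms(1-5)])
qed

section \<open>Contractions realising the bound\<close>

lemma exists_contraction_with_pi:
  assumes "x + y = s" and "x * y - b * a = p" and "cmod p \<le> 1"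
    and "cmod x^2 + cmod y^2 + cmod a^2 + cmod b^2 \<le> 1 + cmod p^2"
  shows "\<exists>A. opnorm A \<le> 1 \<and> piA A = (a, s, p)"
proof -
  define A :: cmat2 where "A = vector [vector [x, b], vector [a, y]]"
  have A: "A$1$1 = x" "A$1$2 = b" "A$2$1 = a" "A$2$2 = y"
    by (simp_all add: A_def)
  have det: "det A = p"
    using assms(2) by (simp add: A det_2)
  have "opnorm A \<le> 1"
    using assms(3,4) by (intro opnorm_le_Frobenius) (auto simp: det A)
  moreover have "piA A = (a, s, p)"
    using assms(1) det by (simp add: piA_def trace_2 A)
  ultimately show ?thesis
    by blast
qed

lemma exists_defect_parameter:
  fixes \<alpha> r d :: real
  assumes "0 < \<alpha>" "0 \<le> r" "0 \<le> d" and "2 * \<alpha> - r \<le> sqrt (r^2 + 4 * d)"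
  obtains \<xi> where "0 \<le> \<xi>" "\<xi> \<le> d" "(\<alpha> - \<xi> / \<alpha>)^2 \<le> r^2"
proof (cases "\<alpha> \<le> r")
  case True
  then show ?thesis
    using assms by (intro that[of 0]) (auto intro: power_mono)
next
  case False
  \<comment> \<open>\<open>\<xi> = \<alpha>\<^sup>2 - r \<alpha>\<close> makes \<open>\<alpha> - \<xi> / \<alpha> = r\<close>\<close>
  have "(2 * \<alpha> - r)^2 \<le> (sqrt (r^2 + 4 * d))^2"
    using False assms(1,4) by (intro power_mono) auto
  also have "\<dots> = r^2 + 4 * d"
    using assms(3) by simp
  finally have "\<alpha>^2 - r * \<alpha> \<le> d"
    by (simp add: power2_eq_square algebra_simps)
  moreover have "(\<alpha> - (\<alpha>^2 - r * \<alpha>) / \<alpha>)^2 = r^2"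
    using assms(1) by (simp add: power2_eq_square field_simps)
  ultimately show ?thesis
    using False assms(1) by (intro that[of "\<alpha>^2 - r * \<alpha>"]) (auto simp: power2_eq_square algebra_simps)
qed

lemma exists_half_multiple_with_defect:
  fixes \<delta> :: complex and \<xi> :: real
  assumes "0 \<le> \<xi>" and "\<xi> \<le> cmod \<delta>^2 / 4"
  obtains h where "cmod h^2 = cmod \<delta>^2 / 4 - \<xi>" and "cmod (\<delta>^2 / 4 - h^2) = \<xi>"
proof (cases "\<delta> = 0")
  case True
  then show ?thesis
    using assms by (intro that[of 0]) auto
next
  case False
  define q where "q = 4 * \<xi> / cmod \<delta>^2"
  define h where "h = complex_of_real (sqrt (1 - q)) * \<delta> / 2"
  have q: "0 \<le> q" "q \<le> 1"
    using assms False by (simp_all add: q_def field_simps)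
  then have h_sq: "h^2 = complex_of_real (1 - q) * (\<delta>^2 / 4)"
    by (simp add: h_def power_mult_distrib power_divide flip: of_real_power)
  show ?thesis
  proof (rule that)
    show "cmod h^2 = cmod \<delta>^2 / 4 - \<xi>"
      using q False by (simp add: h_def norm_mult norm_divide power_mult_distrib power_divide q_def field_simps)
    have "\<delta>^2 / 4 - h^2 = complex_of_real q * (\<delta>^2 / 4)"
      unfolding h_sq by (simp add: field_simps)
    then show "cmod (\<delta>^2 / 4 - h^2) = \<xi>"
      using q False assms(1) by (simp add: norm_mult norm_divide norm_power q_def)
  qed
qed

lemma lambda_bound_imp_contraction_nonzero:
  assumes l1: "cmod l1 \<le> 1" and l2: "cmod l2 \<le> 1" and a: "cmod a \<le> lambda_bound l1 l2"
    and a0: "a \<noteq> 0"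
  shows "\<exists>A. opnorm A \<le> 1 \<and> piA A = (a, l1 + l2, l1 * l2)"
proof -
  define r where "r = sqrt (1 - cmod l1^2) * sqrt (1 - cmod l2^2)"
  define \<delta> where "\<delta> = l1 - l2"
  define d where "d = cmod \<delta>^2 / 4"
  have r: "0 \<le> r" "r^2 = (1 - cmod l1^2) * (1 - cmod l2^2)"
    using l1 l2 by (simp_all add: r_def abs_square_le_1 power_mult_distrib)
  have "cmod (1 - cnj l2 * l1)^2 = r^2 + 4 * d"
    using norm_one_minus_cnj_mult_square[of l2 l1] by (simp add: r(2) d_def \<delta>_def)
  then have "cmod (1 - cnj l2 * l1) = sqrt (r^2 + 4 * d)"
    using real_sqrt_unique[OF _ norm_ge_zero] by metis
  then have "2 * cmod a - r \<le> sqrt (r^2 + 4 * d)"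
    using a by (simp add: lambda_bound_def r_def)
  then obtain \<xi> where \<xi>: "0 \<le> \<xi>" "\<xi> \<le> d" "(cmod a - \<xi> / cmod a)^2 \<le> r^2"
    using exists_defect_parameter[of "cmod a" r d] a0 r(1) by (auto simp: d_def)
  then obtain h where h: "cmod h^2 = d - \<xi>" "cmod (\<delta>^2 / 4 - h^2) = \<xi>"
    using exists_half_multiple_with_defect[of \<xi> \<delta>] by (auto simp: d_def)
  \<comment> \<open>the matrix is \<open>[[x, b], [a, y]]\<close>; its squared Frobenius norm exceeds \<open>|\<lambda>\<^sub>1|\<^sup>2 + |\<lambda>\<^sub>2|\<^sup>2\<close> by
    \<open>(|a| - \<xi> / |a|)\<^sup>2\<close>\<close>
  define x where "x = (l1 + l2) / 2 + h"
  define y where "y = (l1 + l2) / 2 - h"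
  define b where "b = (\<delta>^2 / 4 - h^2) / a"
  have "cmod x^2 + cmod y^2 = 2 * cmod ((l1 + l2) / 2)^2 + 2 * cmod h^2"
    unfolding x_def y_def by (rule parallelogram_law_complex)
  also have "2 * cmod ((l1 + l2) / 2)^2 = cmod l1^2 + cmod l2^2 - 2 * d"
    using parallelogram_law_complex[of l1 l2] by (simp add: d_def \<delta>_def norm_divide power_divide)
  finally have xy: "cmod x^2 + cmod y^2 = cmod l1^2 + cmod l2^2 - 2 * \<xi>"
    using h(1) by simp
  have "cmod a^2 + cmod b^2 - 2 * \<xi> = (cmod a - \<xi> / cmod a)^2"
    using a0 h(2) by (simp add: b_def norm_divide power2_eq_square field_simps)
  then have "cmod x^2 + cmod y^2 + cmod a^2 + cmod b^2 \<le> 1 + cmod (l1 * l2)^2"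
    using xy \<xi>(3) unfolding r(2) by (simp add: norm_mult power_mult_distrib algebra_simps)
  moreover have "x * y - b * a = l1 * l2"
    using a0 by (simp add: x_def y_def b_def \<delta>_def field_simps power2_eq_square)
  moreover have "cmod (l1 * l2) \<le> 1"
    using l1 l2 by (simp add: norm_mult mult_le_one)
  ultimately show ?thesis
    by (intro exists_contraction_with_pi[of x y]) (simp_all add: x_def y_def)
qed

lemma lambda_bound_imp_contraction:
  assumes l1: "cmod l1 \<le> 1" and l2: "cmod l2 \<le> 1" and a: "cmod a \<le> lambda_bound l1 l2"
  shows "\<exists>A. opnorm A \<le> 1 \<and> piA A = (a, l1 + l2, l1 * l2)"
proof (cases "a = 0")
  case True
  have "0 \<le> (1 - cmod l1^2) * (1 - cmod l2^2)"
    using l1 l2 by (simp add: abs_square_le_1)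
  then have "cmod l1^2 + cmod l2^2 + cmod a^2 + cmod 0^2 \<le> 1 + cmod (l1 * l2)^2"
    by (simp add: True norm_mult power_mult_distrib algebra_simps)
  moreover have "cmod (l1 * l2) \<le> 1"
    using l1 l2 by (simp add: norm_mult mult_le_one)
  ultimately show ?thesis
    by (intro exists_contraction_with_pi[of l1 l2 _ 0]) (simp_all add: True)
next
  case False
  then show ?thesis
    using lambda_bound_imp_contraction_nonzero[OF assms] by blast
qed

theorem theorem5p3:
  fixes l1 l2 s p \<beta> a :: complex
  assumes "cmod l1 \<le> 1" and "cmod l2 \<le> 1"
    and "s = l1 + l2" and "p = l1 * l2"
    and "cmod \<beta> \<le> 1" and "s = \<beta> + cnj \<beta> * p"
    and "cmod p = 1 \<Longrightarrow> \<beta> = s / 2"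
  shows "((a, s, p) \<in> closure Pent \<longleftrightarrow> (a, s, p) \<in> closure Pmu)
    \<and> ((a, s, p) \<in> closure Pent \<longleftrightarrow>
         cmod a \<le> cmod (1 - (s / 2 * cnj \<beta>) / (1 + sqrt (1 - (cmod \<beta>)^2))))
    \<and> ((a, s, p) \<in> closure Pent \<longleftrightarrow>
         cmod a \<le> cmod (1 - cnj l2 * l1) / 2
                   + sqrt (1 - (cmod l1)^2) * sqrt (1 - (cmod l2)^2) / 2)
    \<and> ((a, s, p) \<in> closure Pent \<longleftrightarrow> (\<forall>z. cmod z < 1 \<longrightarrow> cmod (Psi z a s p) \<le> 1))
    \<and> ((a, s, p) \<in> closure Pent \<longleftrightarrow> (\<exists>A. opnorm A \<le> 1 \<and> piA A = (a, s, p)))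
    \<and> ((a, s, p) \<in> closure Pent \<longleftrightarrow> (\<exists>A. muE A \<le> 1 \<and> piA A = (a, s, p)))"
proof -
  let ?x = "(a, s, p)"
  have bounds: "beta_bound \<beta> s = lambda_bound l1 l2"
    using assms(1-4,6,7) by (rule beta_bound_eq_lambda_bound)
  have "(\<exists>A. opnorm A \<le> 1 \<and> piA A = ?x) \<Longrightarrow> ?x \<in> closure Pent"
    by (metis piA_in_closure_Pent)
  moreover have "?x \<in> closure Pent \<Longrightarrow> ?x \<in> closure Pmu"
    using closure_mono[OF Pent_subset_Pmu] by blast
  moreover have "?x \<in> closure Pmu \<Longrightarrow> ?x \<in> Psi_bounded_set"
    using closure_Pmu_subset_Psi_bounded_set by blast
  moreover have "?x \<in> Psi_bounded_set \<Longrightarrow> cmod a \<le> lambda_bound l1 l2"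
    using Psi_bounded_imp_le_beta_bound[OF assms(5,6)] unfolding bounds .
  moreover have "cmod a \<le> lambda_bound l1 l2 \<Longrightarrow> \<exists>A. opnorm A \<le> 1 \<and> piA A = ?x"
    using lambda_bound_imp_contraction[OF assms(1,2)] assms(3,4) by simp
  moreover have "(\<exists>A. opnorm A \<le> 1 \<and> piA A = ?x) \<Longrightarrow> (\<exists>A. muE A \<le> 1 \<and> piA A = ?x)"
    using muE_le_opnorm order_trans by blast
  moreover have "(\<exists>A. muE A \<le> 1 \<and> piA A = ?x) \<Longrightarrow> ?x \<in> Psi_bounded_set"
    by (metis piA_in_Psi_bounded_set)
  ultimately show ?thesis
    unfolding Psi_le_1_iff_in_Psi_bounded_set[OF assms(1-4)]
      bounds[unfolded beta_bound_def lambda_bound_def] lambda_bound_def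
    by argo
qed

end
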